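(* Let $w\in S_n$. If $|B(w)|=1$ or $|C(w)|=1$, then $$|B(w)|+|C(w)|-1 = |R(w)| = |B(w)|\cdot|C(w)|.$$
   Context: $S_n$ is generated by the adjacent transpositions $s_1,\dots,s_{n-1}$. A reduced word for $w$ is a word $i_1\cdots i_k$ with $w=s_{i_1}\cdots s_{i_k}$ and $k$ minimal; $R(w)$ is the set of reduced words. A braid move replaces a factor (consecutive letters) $i(i+1)i$ by $(i+1)i(i+1)$ or vice versa; a commutation move replaces a factor $ij$ with $|i-j|>1$ by $ji$. $B(w)$ (resp. $C(w)$) is the set of equivalence classes of $R(w)$ under sequences of braid moves (resp. commutation moves). *)

theory Defs
  imports Main "HOL-Combinatorics.Transposition" "HOL-Combinatorics.Permutations"
begin

definition s :: "nat \<Rightarrow> nat \<Rightarrow> nat" where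
  "s i = transpose i (Suc i)"

definition word_prod :: "nat list \<Rightarrow> (nat \<Rightarrow> nat)" where
  "word_prod ws = foldr (\<lambda>i f. s i \<circ> f) ws id"

definition words :: "nat \<Rightarrow> nat list set" where
  "words n = {ws. set ws \<subseteq> {1..<n}}"

definition reduced_words :: "nat \<Rightarrow> (nat \<Rightarrow> nat) \<Rightarrow> nat list set" where
  "reduced_words n w =
     {ws \<in> words n. word_prod ws = w \<and>
        (\<forall>vs \<in> words n. word_prod vs = w \<longrightarrow> length ws \<le> length vs)}"

definition braid_move :: "nat list \<Rightarrow> nat list \<Rightarrow> bool" where
  "braid_move u v \<longleftrightarrow> (\<exists>xs ys i.
      (u = xs @ [i, Suc i, i] @ ys \<and> v = xs @ [Suc i, i, Suc i] @ ys) \<or>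
      (u = xs @ [Suc i, i, Suc i] @ ys \<and> v = xs @ [i, Suc i, i] @ ys))"

definition comm_move :: "nat list \<Rightarrow> nat list \<Rightarrow> bool" where
  "comm_move u v \<longleftrightarrow> (\<exists>xs ys i j.
      (i + 1 < j \<or> j + 1 < i) \<and> u = xs @ [i, j] @ ys \<and> v = xs @ [j, i] @ ys)"

definition braid_equiv :: "nat list rel" where
  "braid_equiv = {(u, v). braid_move u v}\<^sup>*"

definition comm_equiv :: "nat list rel" where
  "comm_equiv = {(u, v). comm_move u v}\<^sup>*"

definition braid_classes :: "nat \<Rightarrow> (nat \<Rightarrow> nat) \<Rightarrow> nat list set set" where
  "braid_classes n w = reduced_words n w // (braid_equiv \<inter> (reduced_words n w \<times> reduced_words n w))"

definition comm_classes :: "nat \<Rightarrow> (nat \<Rightarrow> nat) \<Rightarrow> nat list set set" where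
  "comm_classes n w = reduced_words n w // (comm_equiv \<inter> (reduced_words n w \<times> reduced_words n w))"

end

theory Submission
  imports Defs
begin

text \<open>
  Commutation moves and braid moves cannot simulate each other on words.
  A braid move changes the multiset of letters, which commutation moves preserve.
  A commutation move changes the weighted letter sum \<open>\<Sum>\<^sub>k h(k) x\<^sub>k\<close> for the
  6-periodic weight \<open>h = 1, 2, 1, -1, -2, -1, \<dots>\<close>, which braid moves preserve because
  \<open>h(k) - h(k+1) + h(k+2) = 0\<close>, while \<open>h(k) \<noteq> h(k+1)\<close>.
  Both kinds of moves stay inside \<open>R(w)\<close>. Hence if all reduced words form a single class
  for one kind of move, no move of the other kind joins two distinct reduced words, so the
  classes of the other kind are singletons and \<open>|R(w)|\<close> equals their number.
\<close>

lemma word_prod_append: "word_prod (xs @ ys) = word_prod xs \<circ> word_prod ys"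
  by (induction xs) (auto simp: word_prod_def)

lemma s_commute: "i + 1 < j \<or> j + 1 < i \<Longrightarrow> s i \<circ> s j = s j \<circ> s i"
  by (rule ext) (auto simp: s_def transpose_def)

lemma s_braid: "s i \<circ> s (Suc i) \<circ> s i = s (Suc i) \<circ> s i \<circ> s (Suc i)"
  by (rule ext) (auto simp: s_def transpose_def)

lemma word_prod_replace_factor:
  "word_prod x = word_prod y \<Longrightarrow> word_prod (xs @ x @ ys) = word_prod (xs @ y @ ys)"
  by (simp only: word_prod_append)

lemma reduced_words_closed:
  assumes "u \<in> reduced_words n w" "word_prod v = word_prod u" "length v = length u" "set v = set u"
  shows "v \<in> reduced_words n w"
  using assms unfolding reduced_words_def words_def by auto

lemma comm_move_reduced_words:
  assumes "comm_move u v" "u \<in> reduced_words n w"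
  shows "v \<in> reduced_words n w"
proof -
  obtain xs ys i j where ij: "i + 1 < j \<or> j + 1 < i"
    and u: "u = xs @ [i, j] @ ys" and v: "v = xs @ [j, i] @ ys"
    using assms(1) unfolding comm_move_def by blast
  have "word_prod [j, i] = word_prod [i, j]"
    using s_commute[OF ij] by (simp add: word_prod_def)
  then have "word_prod v = word_prod u"
    unfolding u v by (rule word_prod_replace_factor)
  with assms(2) show ?thesis
    by (rule reduced_words_closed) (auto simp: u v)
qed

lemma braid_move_reduced_words:
  assumes "braid_move u v" "u \<in> reduced_words n w"
  shows "v \<in> reduced_words n w"
proof -
  have braid3: "word_prod [i, Suc i, i] = word_prod [Suc i, i, Suc i]" for i
    using s_braid[of i] by (simp add: word_prod_def comp_assoc)
  obtain xs ys i where
    "(u = xs @ [i, Suc i, i] @ ys \<and> v = xs @ [Suc i, i, Suc i] @ ys) \<or>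
      (u = xs @ [Suc i, i, Suc i] @ ys \<and> v = xs @ [i, Suc i, i] @ ys)"
    using assms(1) unfolding braid_move_def by blast
  then have "word_prod v = word_prod u \<and> length v = length u \<and> set v = set u"
    using word_prod_replace_factor[OF braid3[of i], of xs ys]
      word_prod_replace_factor[OF braid3[of i, symmetric], of xs ys]
    by auto
  with assms(2) show ?thesis
    by (blast intro: reduced_words_closed)
qed

definition braid_weight :: "nat \<Rightarrow> int" where
  "braid_weight k = [1, 2, 1, -1, -2, -1] ! (k mod 6)"

lemma braid_weight_recurrence:
  "braid_weight k - braid_weight (Suc k) + braid_weight (Suc (Suc k)) = 0"
  and braid_weight_Suc_neq: "braid_weight (Suc k) \<noteq> braid_weight k"
proof -
  define r where "r = k mod 6"
  have r: "r < 6" "k mod 6 = r" by (simp_all add: r_def)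
  have "Suc k mod 6 = Suc r mod 6" "Suc (Suc k) mod 6 = Suc (Suc r) mod 6"
    using r(2) by (metis mod_Suc_eq)+
  moreover have "r = 0 \<or> r = 1 \<or> r = 2 \<or> r = 3 \<or> r = 4 \<or> r = 5"
    using r(1) by linarith
  ultimately have "braid_weight k - braid_weight (Suc k) + braid_weight (Suc (Suc k)) = 0
    \<and> braid_weight (Suc k) \<noteq> braid_weight k"
    unfolding braid_weight_def using r(2) by (elim disjE) simp_all
  then show "braid_weight k - braid_weight (Suc k) + braid_weight (Suc (Suc k)) = 0"
    and "braid_weight (Suc k) \<noteq> braid_weight k" by auto
qed

fun weighted_sum :: "nat \<Rightarrow> nat list \<Rightarrow> int" where
  "weighted_sum k [] = 0"
| "weighted_sum k (x # xs) = braid_weight k * int x + weighted_sum (Suc k) xs"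

lemma weighted_sum_append:
  "weighted_sum k (xs @ ys) = weighted_sum k xs + weighted_sum (k + length xs) ys"
  by (induction xs arbitrary: k) auto

lemma braid_move_weighted_sum:
  assumes "braid_move u v"
  shows "weighted_sum k u = weighted_sum k v"
proof -
  have braid3: "weighted_sum k [i, Suc i, i] = weighted_sum k [Suc i, i, Suc i]" for k i
    using braid_weight_recurrence[of k] by (simp add: algebra_simps)
  obtain xs ys i where
    "(u = xs @ [i, Suc i, i] @ ys \<and> v = xs @ [Suc i, i, Suc i] @ ys) \<or>
      (u = xs @ [Suc i, i, Suc i] @ ys \<and> v = xs @ [i, Suc i, i] @ ys)"
    using assms unfolding braid_move_def by blast
  then show ?thesis
    using braid3[of "k + length xs" i] by (auto simp: weighted_sum_append)
qed

lemma braid_equiv_weighted_sum: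
  "(u, v) \<in> braid_equiv \<Longrightarrow> weighted_sum k u = weighted_sum k v"
  unfolding braid_equiv_def
  by (induction rule: rtrancl_induct) (auto dest: braid_move_weighted_sum)

lemma comm_move_not_braid_equiv:
  assumes "comm_move u v"
  shows "(u, v) \<notin> braid_equiv"
proof
  assume "(u, v) \<in> braid_equiv"
  then have eq: "weighted_sum 0 u = weighted_sum 0 v"
    by (rule braid_equiv_weighted_sum)
  obtain xs ys i j where ij: "i + 1 < j \<or> j + 1 < i"
    and u: "u = xs @ [i, j] @ ys" and v: "v = xs @ [j, i] @ ys"
    using assms unfolding comm_move_def by blast
  let ?k = "length xs"
  have "weighted_sum 0 u - weighted_sum 0 v
      = (braid_weight ?k - braid_weight (Suc ?k)) * (int i - int j)"
    by (simp add: u v weighted_sum_append algebra_simps)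
  moreover have "int i \<noteq> int j" using ij by auto
  ultimately show False
    using eq braid_weight_Suc_neq[of ?k] by simp
qed

lemma comm_equiv_mset: "(u, v) \<in> comm_equiv \<Longrightarrow> mset u = mset v"
  unfolding comm_equiv_def
  by (induction rule: rtrancl_induct) (auto simp: comm_move_def add_mset_commute)

lemma braid_move_not_comm_equiv:
  assumes "braid_move u v"
  shows "(u, v) \<notin> comm_equiv"
proof -
  have "mset u \<noteq> mset v"
    using assms unfolding braid_move_def by (auto simp: add_mset_commute)
  then show ?thesis using comm_equiv_mset by blast
qed

lemma card_quotient_eq_1_related:
  assumes "card (A // (E \<inter> A \<times> A)) = 1" "x \<in> A" "y \<in> A" "refl E"
  shows "(x, y) \<in> E"
proof -
  let ?E = "E \<inter> A \<times> A"
  obtain C where C: "A // ?E = {C}"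
    using assms(1) by (rule card_1_singletonE)
  have "?E `` {x} = C" "?E `` {y} = C"
    using quotientI[of x A ?E] quotientI[of y A ?E] assms(2,3) C by auto
  moreover have "y \<in> ?E `` {y}"
    using assms(3,4) by (auto dest: reflD)
  ultimately show ?thesis by auto
qed

lemma card_quotient_eq_card:
  assumes "\<And>x y. x \<in> A \<Longrightarrow> y \<in> A \<Longrightarrow> (x, y) \<in> E \<Longrightarrow> x = y" "refl E"
  shows "card (A // (E \<inter> A \<times> A)) = card A"
proof -
  have "(E \<inter> A \<times> A) `` {x} = {x}" if "x \<in> A" for x
    using assms that by (auto dest: reflD)
  then have "A // (E \<inter> A \<times> A) = (\<lambda>x. {x}) ` A"
    unfolding quotient_def by auto
  then show ?thesis by (simp add: card_image)
qed

text \<open>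
  A chain of \<open>M\<close>-steps between distinct elements of \<open>A\<close> would start with a step
  inside \<open>A\<close>, joining two \<open>E\<close>-equivalent elements.
\<close>
lemma card_quotient_steps_eq_card:
  assumes single: "card (A // (E \<inter> A \<times> A)) = 1" and "refl E"
    and steps: "\<And>x y. x \<in> A \<Longrightarrow> M x y \<Longrightarrow> y \<in> A \<and> (x, y) \<notin> E"
  shows "card (A // ({(u, v). M u v}\<^sup>* \<inter> A \<times> A)) = card A"
proof (rule card_quotient_eq_card)
  show "refl ({(u, v). M u v}\<^sup>*)" by (simp add: refl_rtrancl)
  fix x y assume x: "x \<in> A" and "y \<in> A" and xy: "(x, y) \<in> {(u, v). M u v}\<^sup>*"
  show "x = y"
  proof (rule ccontr)
    assume "x \<noteq> y"
    then obtain z where "M x z"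
      using xy by (auto elim: converse_rtranclE)
    with steps[OF x] card_quotient_eq_1_related[OF single x _ \<open>refl E\<close>] show False
      by blast
  qed
qed

theorem corollary4p9:
  fixes n :: nat and w :: "nat \<Rightarrow> nat"
  assumes "w permutes {1..n}"
    and "card (braid_classes n w) = 1 \<or> card (comm_classes n w) = 1"
  shows "card (braid_classes n w) + card (comm_classes n w) - 1 = card (reduced_words n w)
       \<and> card (reduced_words n w) = card (braid_classes n w) * card (comm_classes n w)"
  using assms(2)
proof
  assume B: "card (braid_classes n w) = 1"
  have "card (comm_classes n w) = card (reduced_words n w)"
    using B unfolding comm_classes_def braid_classes_def comm_equiv_def
    by (rule card_quotient_steps_eq_card)
      (auto simp: braid_equiv_def refl_rtrancl comm_equiv_def
        intro: comm_move_reduced_words dest: comm_move_not_braid_equiv)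
  with B show ?thesis by simp
next
  assume C: "card (comm_classes n w) = 1"
  have "card (braid_classes n w) = card (reduced_words n w)"
    using C unfolding braid_classes_def comm_classes_def braid_equiv_def
    by (rule card_quotient_steps_eq_card)
      (auto simp: comm_equiv_def refl_rtrancl braid_equiv_def
        intro: braid_move_reduced_words dest: braid_move_not_comm_equiv)
  with C show ?thesis by simp
qed

end
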